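(* Let $\alpha,\beta$ be propositional formulas, $V=V(\alpha)\cup V(\beta)$, and let $B_1,\dots,B_n$ enumerate $V(\beta)\setminus V(\alpha)$. If $\alpha\mathbin{|\!\sim}_{cw}\beta$, then there is a formula $\gamma$ with $V(\gamma)\subseteq V(\alpha)\cap V(\beta)$ such that $\alpha\mathbin{|\!\sim}_{cw}\gamma$ and $\gamma\land\neg B_1\land\dots\land\neg B_n\models\beta$ (in $\mathbf{HT}$). In particular $\gamma\mathbin{|\!\sim}_{cw}\beta$.
   Context: $V(\varphi)$ is the set of atoms of $\varphi$. Here-and-there logic $\mathbf{HT}(V)$ over atom set $V$: interpretations are pairs $\langle H,T\rangle$, $H\subseteq T\subseteq V$, viewed as two-world Kripke models ($h\le t$; atoms true at $h$: $H$, at $t$: $T$) with intuitionistic Kripke clauses, $\neg\varphi:=\varphi\to\bot$; $\mathcal M\models\varphi$ iff $\varphi$ true at both worlds; $\Pi\models\varphi$ (equivalently $\Pi\vdash\varphi$) iff every model of $\Pi$ is a model of $\varphi$. An equilibrium model of $\Pi$ over $V$ is a model $\langle T,T\rangle$ of $\Pi$ in $\mathbf{HT}(V)$ with no model $\langle H,T\rangle$ of $\Pi$ with $H\subsetneq T$; $E_V(\Pi)$ is the set of these. Closed-world equilibrium entailment: if $\Pi$ is non-empty and has equilibrium models, $\Pi\mathbin{|\!\sim}_{cw}\varphi$ iff $\mathcal M\models\varphi$ for every $\mathcal M\in E_{V(\Pi)\cup V(\varphi)}(\Pi)$; otherwise $\Pi\mathbin{|\!\sim}_{cw}\varphi$ iff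 $\Pi\vdash\varphi$ in $\mathbf{HT}$. A formula $\alpha$ is identified with $\{\alpha\}$. *)

theory Defs
  imports Main
begin

datatype 'a form = Atom 'a | Bot | Conj "'a form" "'a form" | Disj "'a form" "'a form"
  | Imp "'a form" "'a form"

definition Neg :: "'a form \<Rightarrow> 'a form" where
  "Neg \<phi> = Imp \<phi> Bot"

fun atoms :: "'a form \<Rightarrow> 'a set" where
  "atoms (Atom p) = {p}"
| "atoms Bot = {}"
| "atoms (Conj a b) = atoms a \<union> atoms b"
| "atoms (Disj a b) = atoms a \<union> atoms b"
| "atoms (Imp a b) = atoms a \<union> atoms b"

definition atoms_set :: "'a form set \<Rightarrow> 'a set" where
  "atoms_set \<Pi> = (\<Union>\<psi>\<in>\<Pi>. atoms \<psi>)"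

fun tsat :: "'a set \<Rightarrow> 'a form \<Rightarrow> bool" where
  "tsat T (Atom p) = (p \<in> T)"
| "tsat T Bot = False"
| "tsat T (Conj a b) = (tsat T a \<and> tsat T b)"
| "tsat T (Disj a b) = (tsat T a \<or> tsat T b)"
| "tsat T (Imp a b) = (tsat T a \<longrightarrow> tsat T b)"

text \<open>Truth at world h (atoms H), with h below t (intuitionistic Kripke clauses).\<close>
fun hsat :: "'a set \<Rightarrow> 'a set \<Rightarrow> 'a form \<Rightarrow> bool" where
  "hsat H T (Atom p) = (p \<in> H)"
| "hsat H T Bot = False"
| "hsat H T (Conj a b) = (hsat H T a \<and> hsat H T b)"
| "hsat H T (Disj a b) = (hsat H T a \<or> hsat H T b)"
| "hsat H T (Imp a b) = ((hsat H T a \<longrightarrow> hsat H T b) \<and> (tsat T a \<longrightarrow> tsat T b))"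

definition ht_models :: "'a set \<Rightarrow> 'a set \<Rightarrow> 'a form \<Rightarrow> bool" where
  "ht_models H T \<phi> = (hsat H T \<phi> \<and> tsat T \<phi>)"

definition ht_models_set :: "'a set \<Rightarrow> 'a set \<Rightarrow> 'a form set \<Rightarrow> bool" where
  "ht_models_set H T \<Pi> = (\<forall>\<psi>\<in>\<Pi>. ht_models H T \<psi>)"

definition ht_entails :: "'a form set \<Rightarrow> 'a form \<Rightarrow> bool" where
  "ht_entails \<Pi> \<phi> = (\<forall>H T. H \<subseteq> T \<and> T \<subseteq> atoms_set \<Pi> \<union> atoms \<phi> \<longrightarrow>
      ht_models_set H T \<Pi> \<longrightarrow> ht_models H T \<phi>)"

text \<open>Equilibrium models of Pi over V (identified by their T component: <T,T>).\<close>
definition equilibrium_model :: "'a set \<Rightarrow> 'a form set \<Rightarrow> 'a set \<Rightarrow> bool" where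
  "equilibrium_model V \<Pi> T = (T \<subseteq> V \<and> ht_models_set T T \<Pi> \<and>
      \<not> (\<exists>H. H \<subset> T \<and> ht_models_set H T \<Pi>))"

definition cw_entails :: "'a form set \<Rightarrow> 'a form \<Rightarrow> bool" where
  "cw_entails \<Pi> \<phi> =
    (if \<Pi> \<noteq> {} \<and> (\<exists>T. equilibrium_model (atoms_set \<Pi> \<union> atoms \<phi>) \<Pi> T)
     then (\<forall>T. equilibrium_model (atoms_set \<Pi> \<union> atoms \<phi>) \<Pi> T \<longrightarrow> ht_models T T \<phi>)
     else ht_entails \<Pi> \<phi>)"

definition conj_negs :: "'a form \<Rightarrow> 'a list \<Rightarrow> 'a form" where
  "conj_negs \<gamma> Bs = foldl (\<lambda>acc b. Conj acc (Neg (Atom b))) \<gamma> Bs"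

end

theory Submission
  imports Defs
begin

text \<open>
  Let C be the common vocabulary of \<alpha> and \<beta>.  The key tool is a
  definability result for here-and-there logic: over a finite vocabulary C, every
  set of interpretations that is closed under passing from \<langle>H,T\<rangle> to \<langle>T,T\<rangle> is the
  model class of some formula over C.  With it the theorem splits into two cases.
  If \<alpha> has equilibrium models, take \<gamma> defining the total interpretations \<langle>S,S\<rangle>,
  S \<subseteq> C, that classically satisfy \<beta>; its equilibrium models are exactly these,
  and together with not B1 and ... and not Bn it pins down every atom of \<beta>.
  If \<alpha> has none, cw-entailment is plain HT-consequence, and \<gamma> is the uniform
  interpolant of \<alpha> over C (the definition of the C-projections of the models of
  \<alpha>), which is an HT interpolant between \<alpha> and \<beta>.
\<close>

text \<open>Vocabularies are finite, so definability applies to V(\<alpha>) \<inter> V(\<beta>).\<close>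
lemma finite_atoms: "finite (atoms \<phi>)"
  by (induction \<phi>) auto

lemma sat_local:
  "atoms \<phi> \<subseteq> A \<Longrightarrow> H \<inter> A = H' \<inter> A \<Longrightarrow> T \<inter> A = T' \<inter> A \<Longrightarrow>
   (hsat H T \<phi> = hsat H' T' \<phi>) \<and> (tsat T \<phi> = tsat T' \<phi>)"
  by (induction \<phi>) (auto simp: set_eq_iff)

lemma ht_models_local:
  "atoms \<phi> \<subseteq> A \<Longrightarrow> H \<inter> A = H' \<inter> A \<Longrightarrow> T \<inter> A = T' \<inter> A \<Longrightarrow>
   ht_models H T \<phi> = ht_models H' T' \<phi>"
  using sat_local unfolding ht_models_def by metis

lemma hsat_total: "hsat T T \<phi> = tsat T \<phi>"
  by (induction \<phi>) auto

lemma ht_models_total: "ht_models T T \<phi> = tsat T \<phi>"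
  by (simp add: ht_models_def hsat_total)

lemma hsat_persistent: "H \<subseteq> T \<Longrightarrow> hsat H T \<phi> \<Longrightarrow> tsat T \<phi>"
  by (induction \<phi>) auto

lemma atoms_set_singleton [simp]: "atoms_set {\<phi>} = atoms \<phi>"
  by (simp add: atoms_set_def)

definition ht_conseq :: "'a form \<Rightarrow> 'a form \<Rightarrow> bool" where
  "ht_conseq \<phi> \<psi> = (\<forall>H T. H \<subseteq> T \<longrightarrow> ht_models H T \<phi> \<longrightarrow> ht_models H T \<psi>)"

text \<open>By locality, restricting to interpretations over V(\<phi>) \<union> V(\<psi>) loses nothing.\<close>
lemma ht_entails_iff_conseq: "ht_entails {\<phi>} \<psi> = ht_conseq \<phi> \<psi>"
proof
  assume entails: "ht_entails {\<phi>} \<psi>"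
  show "ht_conseq \<phi> \<psi>" unfolding ht_conseq_def
  proof (intro allI impI)
    fix H T :: "'a set" assume HT: "H \<subseteq> T" and model: "ht_models H T \<phi>"
    define A where "A = atoms \<phi> \<union> atoms \<psi>"
    have restrict: "ht_models H T \<chi> = ht_models (H \<inter> A) (T \<inter> A) \<chi>" if "atoms \<chi> \<subseteq> A" for \<chi>
      by (rule ht_models_local[OF that]) auto
    have "H \<inter> A \<subseteq> T \<inter> A" "T \<inter> A \<subseteq> atoms \<phi> \<union> atoms \<psi>"
      using HT by (auto simp: A_def)
    moreover have "ht_models (H \<inter> A) (T \<inter> A) \<phi>"
      using model restrict[of \<phi>] by (simp add: A_def)
    ultimately have "ht_models (H \<inter> A) (T \<inter> A) \<psi>"
      using entails unfolding ht_entails_def ht_models_set_def by simp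
    then show "ht_models H T \<psi>"
      using restrict[of \<psi>] by (simp add: A_def)
  qed
next
  assume "ht_conseq \<phi> \<psi>"
  then show "ht_entails {\<phi>} \<psi>"
    unfolding ht_conseq_def ht_entails_def ht_models_set_def by simp
qed

lemma conj_negs_sat:
  "hsat H T (conj_negs \<gamma> Bs) = (hsat H T \<gamma> \<and> (\<forall>b\<in>set Bs. b \<notin> H \<and> b \<notin> T))
   \<and> tsat T (conj_negs \<gamma> Bs) = (tsat T \<gamma> \<and> (\<forall>b\<in>set Bs. b \<notin> T))"
  unfolding conj_negs_def by (induction Bs arbitrary: \<gamma>) (auto simp: Neg_def)

lemma ht_models_conj_negs:
  "ht_models H T (conj_negs \<gamma> Bs) \<Longrightarrow> ht_models H T \<gamma> \<and> (\<forall>b\<in>set Bs. b \<notin> H \<and> b \<notin> T)"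
  using conj_negs_sat unfolding ht_models_def by metis

lemma conseq_conj_negs: "ht_conseq \<gamma> \<beta> \<Longrightarrow> ht_entails {conj_negs \<gamma> Bs} \<beta>"
  unfolding ht_entails_iff_conseq ht_conseq_def using ht_models_conj_negs by blast

text \<open>
  Equilibrium models of a formula lie inside its vocabulary (otherwise removing the
  extra atoms from the here-world gives a smaller model), hence they do not depend
  on the ambient vocabulary V as long as it contains V(\<phi>).
\<close>
lemma equilibrium_atoms: "equilibrium_model V {\<phi>} T \<Longrightarrow> T \<subseteq> atoms \<phi>"
proof (rule ccontr)
  assume eq: "equilibrium_model V {\<phi>} T" and "\<not> T \<subseteq> atoms \<phi>"
  then have smaller: "T \<inter> atoms \<phi> \<subset> T" by auto
  have "ht_models (T \<inter> atoms \<phi>) T \<phi> = ht_models T T \<phi>"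
    by (rule ht_models_local[of \<phi> "atoms \<phi>"]) auto
  then show False using eq smaller unfolding equilibrium_model_def ht_models_set_def by auto
qed

lemma equilibrium_vocabulary:
  assumes "atoms \<phi> \<subseteq> V" and "atoms \<phi> \<subseteq> V'"
  shows "equilibrium_model V {\<phi>} T = equilibrium_model V' {\<phi>} T"
proof -
  have "T \<subseteq> V \<longleftrightarrow> T \<subseteq> V'" if "equilibrium_model W {\<phi>} T" for W
    using equilibrium_atoms[OF that] assms by blast
  then show ?thesis unfolding equilibrium_model_def by metis
qed

lemma cw_entails_with_equilibria:
  assumes "\<exists>T. equilibrium_model (atoms \<alpha>) {\<alpha>} T"
  shows "cw_entails {\<alpha>} \<phi> = (\<forall>T. equilibrium_model (atoms \<alpha>) {\<alpha>} T \<longrightarrow> tsat T \<phi>)"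
  using assms equilibrium_vocabulary[of \<alpha> "atoms \<alpha>" "atoms \<alpha> \<union> atoms \<phi>"]
  by (simp add: cw_entails_def ht_models_total)

lemma cw_entails_without_equilibria:
  assumes "\<nexists>T. equilibrium_model (atoms \<alpha>) {\<alpha>} T"
  shows "cw_entails {\<alpha>} \<phi> = ht_conseq \<alpha> \<phi>"
  using assms equilibrium_vocabulary[of \<alpha> "atoms \<alpha>" "atoms \<alpha> \<union> atoms \<phi>"]
  by (simp add: cw_entails_def ht_entails_iff_conseq)

lemma conseq_cw_entails:
  assumes "ht_conseq \<gamma> \<beta>"
  shows "cw_entails {\<gamma>} \<beta>"
proof (cases "\<exists>T. equilibrium_model (atoms \<gamma>) {\<gamma>} T")
  case True
  have "tsat T \<beta>" if "equilibrium_model (atoms \<gamma>) {\<gamma>} T" for T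
  proof -
    have "ht_models T T \<gamma>"
      using that by (simp add: equilibrium_model_def ht_models_set_def)
    then show ?thesis using assms ht_models_total unfolding ht_conseq_def by blast
  qed
  then show ?thesis by (simp add: cw_entails_with_equilibria[OF True])
next
  case False
  then show ?thesis using assms by (simp add: cw_entails_without_equilibria)
qed

definition bigConj :: "'a form list \<Rightarrow> 'a form" where
  "bigConj xs = foldr Conj xs (Neg Bot)"

definition bigDisj :: "'a form list \<Rightarrow> 'a form" where
  "bigDisj xs = foldr Disj xs Bot"

lemma bigConj_sat:
  "hsat H T (bigConj xs) = (\<forall>x\<in>set xs. hsat H T x)
   \<and> tsat T (bigConj xs) = (\<forall>x\<in>set xs. tsat T x)
   \<and> atoms (bigConj xs) = (\<Union>x\<in>set xs. atoms x)"
  unfolding bigConj_def by (induction xs) (auto simp: Neg_def)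

lemma bigDisj_sat:
  "hsat H T (bigDisj xs) = (\<exists>x\<in>set xs. hsat H T x)
   \<and> tsat T (bigDisj xs) = (\<exists>x\<in>set xs. tsat T x)
   \<and> atoms (bigDisj xs) = (\<Union>x\<in>set xs. atoms x)"
  unfolding bigDisj_def by (induction xs) auto

definition list_of :: "'b set \<Rightarrow> 'b list" where
  "list_of S = (SOME xs. set xs = S)"

lemma set_list_of: "finite S \<Longrightarrow> set (list_of S) = S"
  unfolding list_of_def by (metis (mono_tags, lifting) finite_list someI_ex)

text \<open>
  It is false exactly at the interpretations whose
  C-restriction is \<langle>H,T\<rangle>, together with (when H = T) all those with there-world T.
\<close>
definition excluding :: "'a set \<Rightarrow> 'a set \<Rightarrow> 'a set \<Rightarrow> 'a form" where
  "excluding C H T = Imp (bigConj (map Atom (list_of H) @ map (\<lambda>q. Neg (Atom q)) (list_of (C - T))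
      @ map (\<lambda>p. Neg (Neg (Atom p))) (list_of (T - H)))) (bigDisj (map Atom (list_of (T - H))))"

lemma excluding_atoms:
  "finite C \<Longrightarrow> H \<subseteq> T \<Longrightarrow> T \<subseteq> C \<Longrightarrow> atoms (excluding C H T) \<subseteq> C"
  using finite_subset[of H C] finite_subset[of T C]
  by (auto simp: excluding_def bigConj_sat bigDisj_sat set_list_of Neg_def)

lemma excluding_sat:
  assumes "finite C" "H \<subseteq> T" "T \<subseteq> C" "H' \<subseteq> T'"
  shows "ht_models H' T' (excluding C H T) = (\<not> (T' \<inter> C = T \<and> (H = T \<or> H' \<inter> C = H)))"
proof -
  have fin: "finite H" "finite T" using assms by (meson finite_subset)+
  define ant where "ant = bigConj (map Atom (list_of H) @ map (\<lambda>q. Neg (Atom q)) (list_of (C - T))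
      @ map (\<lambda>p. Neg (Neg (Atom p))) (list_of (T - H)))"
  define cons where "cons = bigDisj (map Atom (list_of (T - H)))"
  have "tsat T' ant = (H \<subseteq> T' \<and> (C - T) \<inter> T' = {} \<and> T - H \<subseteq> T')"
    unfolding ant_def using assms fin by (simp add: bigConj_sat set_list_of Neg_def ball_Un) blast
  then have ant_t: "tsat T' ant = (T' \<inter> C = T)"
    using assms by blast
  have "hsat H' T' ant = (H \<subseteq> H' \<and> (C - T) \<inter> T' = {} \<and> T - H \<subseteq> T')"
    unfolding ant_def using assms fin by (simp add: bigConj_sat set_list_of Neg_def ball_Un) blast
  then have ant_h: "hsat H' T' ant = (T' \<inter> C = T \<and> H \<subseteq> H')"
    using assms by blast
  have cons_t: "tsat T' cons = ((T - H) \<inter> T' \<noteq> {})"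
    using fin by (simp add: cons_def bigDisj_sat set_list_of) blast
  have cons_h: "hsat H' T' cons = ((T - H) \<inter> H' \<noteq> {})"
    using fin by (simp add: cons_def bigDisj_sat set_list_of) blast
  have split: "excluding C H T = Imp ant cons"
    unfolding excluding_def ant_def cons_def ..
  show ?thesis
    unfolding ht_models_def split hsat.simps tsat.simps ant_t ant_h cons_t cons_h
    using assms by blast
qed

definition defines_over :: "'a set \<Rightarrow> ('a set \<times> 'a set) set \<Rightarrow> 'a form \<Rightarrow> bool" where
  "defines_over C M \<gamma> = (atoms \<gamma> \<subseteq> C \<and>
     (\<forall>H T. H \<subseteq> T \<longrightarrow> ht_models H T \<gamma> = ((H \<inter> C, T \<inter> C) \<in> M)))"

text \<open>
  Definability: over a finite vocabulary, every set of interpretations closed under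
  \<langle>H,T\<rangle> \<mapsto> \<langle>T,T\<rangle> is defined by the conjunction of the formulas excluding its
  complement.
\<close>
lemma definable:
  assumes C: "finite C"
    and M_interp: "\<And>H T. (H, T) \<in> M \<Longrightarrow> H \<subseteq> T \<and> T \<subseteq> C"
    and M_total: "\<And>H T. (H, T) \<in> M \<Longrightarrow> (T, T) \<in> M"
  obtains \<gamma> where "defines_over C M \<gamma>"
proof
  define N where "N = {(H, T). H \<subseteq> T \<and> T \<subseteq> C \<and> (H, T) \<notin> M}"
  have fin: "finite N"
    by (rule finite_subset[of _ "Pow C \<times> Pow C"]) (auto simp: N_def C)
  define \<gamma> where "\<gamma> = bigConj (map (\<lambda>(H, T). excluding C H T) (list_of N))"
  have "atoms \<gamma> \<subseteq> C"
    unfolding \<gamma>_def using fin excluding_atoms[OF C] by (auto simp: bigConj_sat set_list_of N_def)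
  moreover have "ht_models H' T' \<gamma> = ((H' \<inter> C, T' \<inter> C) \<in> M)" if HT: "H' \<subseteq> T'" for H' T'
  proof -
    have "ht_models H' T' \<gamma> = (\<forall>(H, T)\<in>N. ht_models H' T' (excluding C H T))"
      unfolding \<gamma>_def ht_models_def using fin by (auto simp: bigConj_sat set_list_of)
    also have "\<dots> = (\<forall>(H, T)\<in>N. \<not> (T' \<inter> C = T \<and> (H = T \<or> H' \<inter> C = H)))"
      using excluding_sat[OF C _ _ HT] by (auto simp: N_def)
    also have "\<dots> = ((H' \<inter> C, T' \<inter> C) \<in> M)"
    proof
      assume none_excluded: "\<forall>(H, T)\<in>N. \<not> (T' \<inter> C = T \<and> (H = T \<or> H' \<inter> C = H))"
      show "(H' \<inter> C, T' \<inter> C) \<in> M"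
      proof (rule ccontr)
        assume "(H' \<inter> C, T' \<inter> C) \<notin> M"
        then have "(H' \<inter> C, T' \<inter> C) \<in> N" using HT by (auto simp: N_def)
        then show False using none_excluded by auto
      qed
    next
      assume member: "(H' \<inter> C, T' \<inter> C) \<in> M"
      show "\<forall>(H, T)\<in>N. \<not> (T' \<inter> C = T \<and> (H = T \<or> H' \<inter> C = H))"
        using member M_total[OF member] by (auto simp: N_def)
    qed
    finally show ?thesis .
  qed
  ultimately show "defines_over C M \<gamma>" by (simp add: defines_over_def)
qed

text \<open>
  Uniform interpolation: \<alpha> has a strongest HT consequence over any finite C, namely
  the definition of the C-projections of its models.
\<close>
lemma uniform_interpolant:
  assumes "finite C"
  obtains \<gamma> where "atoms \<gamma> \<subseteq> C" "ht_conseq \<alpha> \<gamma>"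
    "\<And>\<beta>. atoms \<alpha> \<inter> atoms \<beta> \<subseteq> C \<Longrightarrow> ht_conseq \<alpha> \<beta> \<Longrightarrow> ht_conseq \<gamma> \<beta>"
proof -
  define M where "M = {(H \<inter> C, T \<inter> C) | H T. H \<subseteq> T \<and> ht_models H T \<alpha>}"
  have M_total: "(T, T) \<in> M" if "(H, T) \<in> M" for H T
  proof -
    obtain H1 T1 where "T = T1 \<inter> C" "H1 \<subseteq> T1" "ht_models H1 T1 \<alpha>"
      using \<open>(H, T) \<in> M\<close> unfolding M_def by blast
    moreover have "ht_models T1 T1 \<alpha>"
      using calculation hsat_persistent ht_models_total unfolding ht_models_def by metis
    ultimately show ?thesis unfolding M_def by blast
  qed
  obtain \<gamma> where \<gamma>: "defines_over C M \<gamma>"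
    using definable[OF assms, of M] M_total unfolding M_def by blast
  have "ht_conseq \<gamma> \<beta>" if common: "atoms \<alpha> \<inter> atoms \<beta> \<subseteq> C" and \<alpha>\<beta>: "ht_conseq \<alpha> \<beta>" for \<beta>
    unfolding ht_conseq_def
  proof (intro allI impI)
    fix H T :: "'a set" assume HT: "H \<subseteq> T" and "ht_models H T \<gamma>"
    then obtain H1 T1 where proj: "H \<inter> C = H1 \<inter> C" "T \<inter> C = T1 \<inter> C"
      and HT1: "H1 \<subseteq> T1" and model1: "ht_models H1 T1 \<alpha>"
      using \<gamma> unfolding defines_over_def M_def by auto
    txt \<open>Glue the \<alpha>-part of \<langle>H1,T1\<rangle> with the rest of \<langle>H,T\<rangle>; the two agree on C.\<close>
    define H2 where "H2 = (H1 \<inter> atoms \<alpha>) \<union> (H - atoms \<alpha>)"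
    define T2 where "T2 = (T1 \<inter> atoms \<alpha>) \<union> (T - atoms \<alpha>)"
    have "ht_models H2 T2 \<alpha>"
      using model1 ht_models_local[of \<alpha> "atoms \<alpha>" H2 H1 T2 T1] by (auto simp: H2_def T2_def)
    moreover have "H2 \<subseteq> T2" using HT HT1 by (auto simp: H2_def T2_def)
    ultimately have "ht_models H2 T2 \<beta>" using \<alpha>\<beta> unfolding ht_conseq_def by blast
    moreover have "H2 \<inter> atoms \<beta> = H \<inter> atoms \<beta>" "T2 \<inter> atoms \<beta> = T \<inter> atoms \<beta>"
      using proj common by (auto simp: H2_def T2_def)
    ultimately show "ht_models H T \<beta>" using ht_models_local[of \<beta> "atoms \<beta>" H2 H T2 T] by blast
  qed
  moreover have "ht_conseq \<alpha> \<gamma>"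
    using \<gamma> unfolding ht_conseq_def defines_over_def M_def by blast
  ultimately show ?thesis using that \<gamma> unfolding defines_over_def by blast
qed

text \<open>
  A formula defining only total interpretations \<langle>S,S\<rangle> (S \<subseteq> C, P S) has exactly
  these S as equilibrium models: no \<langle>H,S\<rangle> with H \<subset> S is a model.
\<close>
lemma equilibria_of_total_definition:
  assumes \<gamma>: "defines_over C {(S, S) | S. S \<subseteq> C \<and> P S} \<gamma>"
  shows "equilibrium_model (atoms \<gamma>) {\<gamma>} T = (T \<subseteq> C \<and> P T)"
proof
  assume eq: "equilibrium_model (atoms \<gamma>) {\<gamma>} T"
  then have "T \<subseteq> C" "ht_models T T \<gamma>"
    using \<gamma> equilibrium_atoms[OF eq] by (auto simp: defines_over_def equilibrium_model_def ht_models_set_def)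
  then show "T \<subseteq> C \<and> P T" using \<gamma> by (auto simp: defines_over_def Int_absorb2)
next
  assume T: "T \<subseteq> C \<and> P T"
  have model: "ht_models T T \<gamma>"
    using \<gamma> T by (auto simp: defines_over_def Int_absorb2)
  have minimal: "\<not> ht_models H T \<gamma>" if "H \<subset> T" for H
  proof
    assume "ht_models H T \<gamma>"
    then have "H \<inter> C = T \<inter> C"
      using \<gamma> \<open>H \<subset> T\<close> by (auto simp: defines_over_def)
    then show False using \<open>H \<subset> T\<close> T by blast
  qed
  have "equilibrium_model C {\<gamma>} T"
    using T model minimal by (auto simp: equilibrium_model_def ht_models_set_def)
  then show "equilibrium_model (atoms \<gamma>) {\<gamma>} T"
    using equilibrium_vocabulary[of \<gamma> C "atoms \<gamma>"] \<gamma> by (simp add: defines_over_def)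
qed

text \<open>
  The case where \<alpha> has equilibrium models: \<gamma> defines the total interpretations
  over C = V(\<alpha>) \<inter> V(\<beta>) that classically satisfy \<beta>.  Equilibrium models of \<alpha>
  lie in V(\<alpha>), so only their C-part matters for \<beta>; and a model of \<gamma> in which
  the atoms of V(\<beta>) - V(\<alpha>) are false agrees on V(\<beta>) with such an \<langle>S,S\<rangle>.
\<close>
lemma interpolant_with_equilibria:
  assumes equilibria: "\<exists>T. equilibrium_model (atoms \<alpha>) {\<alpha>} T"
    and \<alpha>\<beta>: "cw_entails {\<alpha>} \<beta>" and Bs: "set Bs = atoms \<beta> - atoms \<alpha>"
  shows "\<exists>\<gamma>. atoms \<gamma> \<subseteq> atoms \<alpha> \<inter> atoms \<beta> \<and> cw_entails {\<alpha>} \<gamma>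
           \<and> ht_entails {conj_negs \<gamma> Bs} \<beta> \<and> cw_entails {\<gamma>} \<beta>"
proof -
  define C where "C = atoms \<alpha> \<inter> atoms \<beta>"
  have "finite C" unfolding C_def using finite_atoms by blast
  then obtain \<gamma> where \<gamma>: "defines_over C {(S, S) | S. S \<subseteq> C \<and> tsat S \<beta>} \<gamma>"
    by (rule definable[where M = "{(S, S) | S. S \<subseteq> C \<and> tsat S \<beta>}"]) auto
  have \<beta>_on_C: "tsat (T \<inter> C) \<beta> = tsat T \<beta>" if "T \<subseteq> atoms \<alpha>" for T
    using sat_local[of \<beta> "atoms \<beta>" "T \<inter> C" T "T \<inter> C" T] that unfolding C_def by auto
  have \<alpha>_equilibria: "tsat (T \<inter> C) \<beta>" if "equilibrium_model (atoms \<alpha>) {\<alpha>} T" for T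
    using \<alpha>\<beta> that equilibrium_atoms[OF that] \<beta>_on_C
    by (simp add: cw_entails_with_equilibria[OF equilibria])
  have "cw_entails {\<alpha>} \<gamma>"
  proof (unfold cw_entails_with_equilibria[OF equilibria], intro allI impI)
    fix T assume "equilibrium_model (atoms \<alpha>) {\<alpha>} T"
    then have "ht_models T T \<gamma>" using \<gamma> \<alpha>_equilibria by (auto simp: defines_over_def)
    then show "tsat T \<gamma>" by (simp add: ht_models_total)
  qed
  moreover have "cw_entails {\<gamma>} \<beta>"
  proof -
    obtain T0 where "equilibrium_model (atoms \<alpha>) {\<alpha>} T0" using equilibria by blast
    then have "equilibrium_model (atoms \<gamma>) {\<gamma>} (T0 \<inter> C)"
      using \<alpha>_equilibria equilibria_of_total_definition[OF \<gamma>] by simp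
    then have "\<exists>T. equilibrium_model (atoms \<gamma>) {\<gamma>} T" by blast
    then show ?thesis
      by (simp add: cw_entails_with_equilibria equilibria_of_total_definition[OF \<gamma>])
  qed
  moreover have "ht_entails {conj_negs \<gamma> Bs} \<beta>"
    unfolding ht_entails_iff_conseq ht_conseq_def
  proof (intro allI impI)
    fix H T :: "'a set" assume HT: "H \<subseteq> T" and "ht_models H T (conj_negs \<gamma> Bs)"
    then have "ht_models H T \<gamma>" and Bs_false: "\<forall>b\<in>set Bs. b \<notin> H \<and> b \<notin> T"
      using ht_models_conj_negs by blast+
    then obtain S where S: "H \<inter> C = S" "T \<inter> C = S" "tsat S \<beta>"
      using \<gamma> HT by (auto simp: defines_over_def)
    have "H \<inter> atoms \<beta> = S \<inter> atoms \<beta>" "T \<inter> atoms \<beta> = S \<inter> atoms \<beta>"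
      using S Bs_false Bs unfolding C_def by blast+
    then show "ht_models H T \<beta>"
      using S(3) ht_models_local[of \<beta> "atoms \<beta>" H S T S] by (simp add: ht_models_total)
  qed
  ultimately show ?thesis using \<gamma> unfolding defines_over_def C_def by blast
qed

theorem proposition4:
  fixes \<alpha> \<beta> :: "'a form" and Bs :: "'a list"
  assumes "distinct Bs" and "set Bs = atoms \<beta> - atoms \<alpha>"
    and "cw_entails {\<alpha>} \<beta>"
  shows "\<exists>\<gamma>. atoms \<gamma> \<subseteq> atoms \<alpha> \<inter> atoms \<beta> \<and> cw_entails {\<alpha>} \<gamma>
           \<and> ht_entails {conj_negs \<gamma> Bs} \<beta> \<and> cw_entails {\<gamma>} \<beta>"
proof (cases "\<exists>T. equilibrium_model (atoms \<alpha>) {\<alpha>} T")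
  case True
  then show ?thesis using interpolant_with_equilibria assms(2,3) by blast
next
  case False
  have \<alpha>\<beta>: "ht_conseq \<alpha> \<beta>"
    using assms(3) cw_entails_without_equilibria[OF False] by simp
  obtain \<gamma> where "atoms \<gamma> \<subseteq> atoms \<alpha> \<inter> atoms \<beta>" and \<alpha>\<gamma>: "ht_conseq \<alpha> \<gamma>"
    and "\<And>\<beta>'. atoms \<alpha> \<inter> atoms \<beta>' \<subseteq> atoms \<alpha> \<inter> atoms \<beta> \<Longrightarrow> ht_conseq \<alpha> \<beta>' \<Longrightarrow> ht_conseq \<gamma> \<beta>'"
    using uniform_interpolant[of "atoms \<alpha> \<inter> atoms \<beta>" \<alpha>] finite_atoms by blast
  then have "ht_conseq \<gamma> \<beta>" using \<alpha>\<beta> by blast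
  moreover have "cw_entails {\<alpha>} \<gamma>"
    using \<alpha>\<gamma> cw_entails_without_equilibria[OF False] by simp
  ultimately show ?thesis
    using \<open>atoms \<gamma> \<subseteq> atoms \<alpha> \<inter> atoms \<beta>\<close> conseq_conj_negs conseq_cw_entails by blast
qed

end
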